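(* Let $k\ge1$ and $\lambda$ a positive integer. For each $N$, consider the discrete-time Markov chain on $N$ blocks, each in a state in $\{0,1,\dots,k\}$, in which in each time slot $\lambda$ requests arrive; each request selects one of the $N$ blocks uniformly at random and, if the selected block is in state $i$, moves it to state $i+1$ with probability $(k-i)/k$ or to state $i-1$ with probability $i/k$. Let $\mathbf{M}^N(t)=(M_0(t),\dots,M_k(t))$ with $M_i(t)$ the fraction of blocks in state $i$ at slot $t$, and define the rescaled process $\widetilde{\mathbf{M}}^N$ by $\widetilde{\mathbf{M}}^N(t/N)=\mathbf{M}^N(t)$ (with $\varepsilon(N)=1/N$). If $\mathbf{M}^N(0)\to\mathbf{m}$ in probability as $N\to\infty$, then for every $T>0$, $\sup_{0\le t\le T}\|\widetilde{\mathbf{M}}^N(t)-\mathbf{s}(t)\|\to0$ in probability, where $\mathbf{s}(t)$ is the solution with $\mathbf{s}(0)=\mathbf{m}$ of $$\frac{ds_i}{dt}=-\lambda s_i+\lambda\frac{k-i+1}{k}s_{i-1}+\lambda\frac{i+1}{k}s_{i+1}\ (1\le i\le k-1),\quad \frac{ds_0}{dt}=-\lambda s_0+\frac{\lambda}{k}s_1,\quad \frac{ds_k}{dt}=-\lambda s_k+\frac{\lambda}{k}s_{k-1}.$$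
   Context: The blocks model an SSD with $N$ blocks of $k$ pages each under a uniform workload; the state of a block is its number of valid pages, a program request increasing it by one and an invalidate request decreasing it by one. $\mathbf{m}$ is a probability vector on $\{0,\dots,k\}$. *)

theory Defs
  imports "HOL-Probability.Probability"
begin

text \<open>Configurations of the SSD: a list of length N whose j-th entry is the
number of valid pages (state in 0..k) of block j.\<close>

definition request :: "nat \<Rightarrow> nat \<Rightarrow> nat list \<Rightarrow> nat list pmf" where
  "request N k xs =
     bind_pmf (pmf_of_set {..<N}) (\<lambda>j.
     map_pmf (\<lambda>up. xs[j := (if up then xs ! j + 1 else xs ! j - 1)])
       (bernoulli_pmf (real (k - xs ! j) / real k)))"

fun iter_kernel :: "nat \<Rightarrow> ('a \<Rightarrow> 'a pmf) \<Rightarrow> 'a \<Rightarrow> 'a pmf" where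
  "iter_kernel 0 K x = return_pmf x"
| "iter_kernel (Suc n) K x = bind_pmf (K x) (iter_kernel n K)"

definition slot :: "nat \<Rightarrow> nat \<Rightarrow> nat \<Rightarrow> nat list \<Rightarrow> nat list pmf" where
  "slot lam N k = iter_kernel lam (request N k)"

fun path_pmf :: "('a \<Rightarrow> 'a pmf) \<Rightarrow> 'a pmf \<Rightarrow> nat \<Rightarrow> 'a list pmf" where
  "path_pmf K mu 0 = map_pmf (\<lambda>x. [x]) mu"
| "path_pmf K mu (Suc n) =
     bind_pmf (path_pmf K mu n) (\<lambda>xs. map_pmf (\<lambda>y. xs @ [y]) (K (last xs)))"

definition frac :: "nat \<Rightarrow> nat list \<Rightarrow> nat \<Rightarrow> real" where
  "frac N xs i = real (count_list xs i) / real N"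

definition vnorm :: "nat \<Rightarrow> (nat \<Rightarrow> real) \<Rightarrow> real" where
  "vnorm k v = Max ((\<lambda>i. \<bar>v i\<bar>) ` {..k})"

definition ode_rhs :: "nat \<Rightarrow> nat \<Rightarrow> (nat \<Rightarrow> real) \<Rightarrow> nat \<Rightarrow> real" where
  "ode_rhs lam k s i =
     (if i = 0 then - real lam * s 0 + real lam / real k * s 1
      else if i = k then - real lam * s k + real lam / real k * s (k - 1)
      else - real lam * s i + real lam * real (k - i + 1) / real k * s (i - 1)
           + real lam * real (i + 1) / real k * s (i + 1))"

definition rescaled :: "nat \<Rightarrow> nat list list \<Rightarrow> real \<Rightarrow> nat \<Rightarrow> real" where
  "rescaled N p t = frac N (p ! nat \<lfloor>real N * t\<rfloor>)"

end

theory Submission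
  imports Defs
begin

text \<open>The drift is linear: the expected occupancy measure after one request is exactly one
  step, of size \<open>1 / (\<lambda> N)\<close>, of the Euler scheme for the mean-field equation. Hence along
  the request chain the Euler-propagated occupancy is a martingale whose increments are \<open>O(1/N)\<close>
  over the \<open>O(N)\<close> requests up to time \<open>T\<close>; its fourth moment is \<open>O(1/N\<^sup>2)\<close>, so by Markov's
  inequality and a union bound over the \<open>O(N)\<close> slots and \<open>k + 1\<close> states, with probability
  \<open>1 - O(1/N)\<close> the whole trajectory stays close to the Euler prediction from its initial state.
  The Euler scheme is \<open>O(1/N)\<close>-close to the solution \<open>s\<close>, and an initial error is amplified by
  at most \<open>exp (3 \<lambda> T)\<close>.\<close>

section \<open>Iterated kernels and discrete martingales\<close>

lemma expectation_bind_pmf_finite: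
  fixes g :: "'b \<Rightarrow> real"
  assumes S: "finite S" and sub: "\<And>x. x \<in> set_pmf M \<Longrightarrow> set_pmf (f x) \<subseteq> S"
  shows "measure_pmf.expectation (bind_pmf M f) g
       = measure_pmf.expectation M (\<lambda>x. measure_pmf.expectation (f x) g)"
proof -
  define g' where "g' y = (if y \<in> S then g y else 0)" for y
  have bounded: "\<bar>g' y\<bar> \<le> (\<Sum>z\<in>S. \<bar>g z\<bar>)" for y
    using S by (auto simp: g'_def intro: member_le_sum)
  have "measure_pmf.expectation (bind_pmf M f) g = measure_pmf.expectation (bind_pmf M f) g'"
    by (intro integral_cong_AE) (auto simp: AE_measure_pmf_iff g'_def dest: sub)
  also have "\<dots> = measure_pmf.expectation M (\<lambda>x. measure_pmf.expectation (f x) g')"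
    unfolding measure_pmf_bind
    by (rule integral_bind[where K="count_space UNIV" and B="\<Sum>z\<in>S. \<bar>g z\<bar>" and B'=1])
       (auto simp: bounded intro: measure_pmf_in_subprob_algebra)
  also have "\<dots> = measure_pmf.expectation M (\<lambda>x. measure_pmf.expectation (f x) g)"
    by (intro integral_cong_AE) (auto simp: AE_measure_pmf_iff g'_def dest!: sub intro!: integral_cong_AE)
  finally show ?thesis .
qed

lemma iter_kernel_add: "iter_kernel (a + b) K x = bind_pmf (iter_kernel a K x) (iter_kernel b K)"
proof (induction a arbitrary: x)
  case 0
  then show ?case by (simp add: bind_return_pmf)
next
  case (Suc a)
  then have "iter_kernel (a + b) K = (\<lambda>z. bind_pmf (iter_kernel a K z) (iter_kernel b K))"
    by (simp add: fun_eq_iff)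
  then show ?case by (simp add: bind_assoc_pmf)
qed

lemma iter_kernel_Suc_right: "iter_kernel (Suc n) K x = bind_pmf (iter_kernel n K x) K"
proof -
  have "iter_kernel 1 K = K"
    by (simp add: fun_eq_iff iter_kernel.simps(1)[abs_def] bind_return_pmf')
  then show ?thesis
    using iter_kernel_add[of n 1 K x] by simp
qed

lemma iter_kernel_mult: "iter_kernel n (iter_kernel l K) x = iter_kernel (n * l) K x"
proof (induction n arbitrary: x)
  case 0
  then show ?case by simp
next
  case (Suc n)
  then have "iter_kernel n (iter_kernel l K) = iter_kernel (n * l) K"
    by (simp add: fun_eq_iff)
  then show ?case by (simp add: iter_kernel_add)
qed

lemma set_pmf_iter_kernel:
  assumes "\<And>z. z \<in> S \<Longrightarrow> set_pmf (K z) \<subseteq> S" and "x \<in> S"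
  shows "set_pmf (iter_kernel n K x) \<subseteq> S"
  using assms(2) by (induction n arbitrary: x) (auto dest!: assms(1))

lemma power2_le_of_abs_le:
  fixes e b :: real
  assumes "\<bar>e\<bar> \<le> b"
  shows "e^2 \<le> b^2"
  using assms by (metis abs_ge_zero power2_abs power_mono)

lemma fourth_power_increment_le:
  fixes w e b :: real
  assumes "\<bar>e\<bar> \<le> b"
  shows "6 * w^2 * e^2 + 4 * w * e^3 + e^4 \<le> 8 * b^2 * w^2 + 3 * b^4"
proof -
  have e2: "e^2 \<le> b^2"
    using assms by (rule power2_le_of_abs_le)
  have e4: "e^4 \<le> b^4"
    using power_mono[OF e2, of 2] by (simp flip: power_mult)
  have "w * e^3 \<le> \<bar>w\<bar> * \<bar>e\<bar>^3"
    by (metis abs_ge_self abs_mult power_abs)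
  also have "\<dots> \<le> \<bar>w\<bar> * b^3"
    using assms by (intro mult_left_mono power_mono) auto
  finally have "4 * w * e^3 \<le> 4 * \<bar>w\<bar> * b^3" by simp
  also have "\<dots> \<le> 2 * b^2 * w^2 + 2 * b^4"
  proof -
    have "0 \<le> b^2 * (\<bar>w\<bar> - b)^2" by simp
    then show ?thesis
      by (simp add: power2_eq_square power3_eq_cube power4_eq_xxxx algebra_simps)
  qed
  finally have "4 * w * e^3 \<le> 2 * b^2 * w^2 + 2 * b^4" .
  moreover have "6 * w^2 * e^2 \<le> 6 * w^2 * b^2"
    using e2 by (intro mult_left_mono) auto
  ultimately show ?thesis
    using e4 by (simp add: algebra_simps)
qed

lemma moments_add_centered_le:
  fixes e :: "'a \<Rightarrow> real"
  assumes fin: "finite (set_pmf M)"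
    and centered: "measure_pmf.expectation M e = 0"
    and bounded: "\<And>y. y \<in> set_pmf M \<Longrightarrow> \<bar>e y\<bar> \<le> b"
  shows "measure_pmf.expectation M (\<lambda>y. (w + e y)^2) \<le> w^2 + b^2"
    and "measure_pmf.expectation M (\<lambda>y. (w + e y)^4) \<le> w^4 + 8 * b^2 * w^2 + 3 * b^4"
proof -
  have int: "integrable (measure_pmf M) h" for h :: "'a \<Rightarrow> real"
    by (rule integrable_measure_pmf_finite[OF fin])
  have "measure_pmf.expectation M (\<lambda>y. (w + e y)^2)
      = w^2 + 2 * w * measure_pmf.expectation M e + measure_pmf.expectation M (\<lambda>y. (e y)^2)"
    by (simp add: power2_eq_square algebra_simps int)
  also have "\<dots> \<le> w^2 + b^2"
  proof -
    have "measure_pmf.expectation M (\<lambda>y. (e y)^2) \<le> measure_pmf.expectation M (\<lambda>y. b^2)"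
      using bounded by (intro integral_mono_AE)
        (auto simp: int AE_measure_pmf_iff intro: power2_le_of_abs_le)
    then show ?thesis using centered by simp
  qed
  finally show "measure_pmf.expectation M (\<lambda>y. (w + e y)^2) \<le> w^2 + b^2" .
  have "measure_pmf.expectation M (\<lambda>y. (w + e y)^4)
      = w^4 + 4 * w^3 * measure_pmf.expectation M e
        + measure_pmf.expectation M (\<lambda>y. 6 * w^2 * (e y)^2 + 4 * w * (e y)^3 + (e y)^4)"
    by (simp add: power2_eq_square power3_eq_cube power4_eq_xxxx algebra_simps int)
  also have "\<dots> \<le> w^4 + 8 * b^2 * w^2 + 3 * b^4"
  proof -
    have "measure_pmf.expectation M (\<lambda>y. 6 * w^2 * (e y)^2 + 4 * w * (e y)^3 + (e y)^4)
        \<le> measure_pmf.expectation M (\<lambda>y. 8 * b^2 * w^2 + 3 * b^4)"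
      using bounded by (intro integral_mono_AE)
        (auto simp: int AE_measure_pmf_iff intro: fourth_power_increment_le)
    then show ?thesis using centered by simp
  qed
  finally show "measure_pmf.expectation M (\<lambda>y. (w + e y)^4) \<le> w^4 + 8 * b^2 * w^2 + 3 * b^4" .
qed

lemma martingale_moments_le:
  fixes f :: "nat \<Rightarrow> 'a \<Rightarrow> real"
  assumes fin: "finite S" and inv: "\<And>z. z \<in> S \<Longrightarrow> set_pmf (K z) \<subseteq> S"
    and mart: "\<And>j z. j < M \<Longrightarrow> z \<in> S \<Longrightarrow> measure_pmf.expectation (K z) (f (Suc j)) = f j z"
    and incr: "\<And>j z y. j < M \<Longrightarrow> z \<in> S \<Longrightarrow> y \<in> set_pmf (K z) \<Longrightarrow> \<bar>f (Suc j) y - f j z\<bar> \<le> b"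
    and x: "x \<in> S" and nM: "n \<le> M"
  shows "measure_pmf.expectation (iter_kernel n K x) (\<lambda>y. (f n y - f 0 x)^2) \<le> real n * b^2
       \<and> measure_pmf.expectation (iter_kernel n K x) (\<lambda>y. (f n y - f 0 x)^4) \<le> 4 * real n^2 * b^4"
  using nM
proof (induction n)
  case 0
  then show ?case by simp
next
  case (Suc n)
  then have IH2: "measure_pmf.expectation (iter_kernel n K x) (\<lambda>y. (f n y - f 0 x)^2) \<le> real n * b^2"
    and IH4: "measure_pmf.expectation (iter_kernel n K x) (\<lambda>y. (f n y - f 0 x)^4) \<le> 4 * real n^2 * b^4"
    and nM: "n < M"
    by auto
  have supp: "set_pmf (iter_kernel n K x) \<subseteq> S"
    by (rule set_pmf_iter_kernel[OF inv x])
  have b0: "0 \<le> b"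
    using incr[OF nM x] set_pmf_not_empty[of "K x"] by (meson ex_in_conv order.trans abs_ge_zero)
  have int: "integrable (measure_pmf (iter_kernel n K x)) h" for h :: "'a \<Rightarrow> real"
    using supp fin by (intro integrable_measure_pmf_finite) (rule finite_subset)
  have step: "measure_pmf.expectation (K z) (\<lambda>y. (f (Suc n) y - f 0 x)^2) \<le> (f n z - f 0 x)^2 + b^2"
    "measure_pmf.expectation (K z) (\<lambda>y. (f (Suc n) y - f 0 x)^4)
       \<le> (f n z - f 0 x)^4 + 8 * b^2 * (f n z - f 0 x)^2 + 3 * b^4"
    if z: "z \<in> S" for z
  proof -
    have finK: "finite (set_pmf (K z))"
      using inv[OF z] fin by (rule finite_subset)
    have centered: "measure_pmf.expectation (K z) (\<lambda>y. f (Suc n) y - f n z) = 0"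
      using mart[OF nM z] by (simp add: integrable_measure_pmf_finite[OF finK])
    have "f (Suc n) y - f 0 x = (f n z - f 0 x) + (f (Suc n) y - f n z)" for y
      by simp
    then show "measure_pmf.expectation (K z) (\<lambda>y. (f (Suc n) y - f 0 x)^2) \<le> (f n z - f 0 x)^2 + b^2"
      "measure_pmf.expectation (K z) (\<lambda>y. (f (Suc n) y - f 0 x)^4)
         \<le> (f n z - f 0 x)^4 + 8 * b^2 * (f n z - f 0 x)^2 + 3 * b^4"
      using moments_add_centered_le[OF finK centered incr[OF nM z]] by presburger+
  qed
  have bind: "measure_pmf.expectation (iter_kernel (Suc n) K x) g
      = measure_pmf.expectation (iter_kernel n K x) (\<lambda>z. measure_pmf.expectation (K z) g)"
    for g :: "'a \<Rightarrow> real"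
    unfolding iter_kernel_Suc_right
    by (intro expectation_bind_pmf_finite[OF fin]) (use supp inv in blast)
  have "measure_pmf.expectation (iter_kernel (Suc n) K x) (\<lambda>y. (f (Suc n) y - f 0 x)^2)
      \<le> measure_pmf.expectation (iter_kernel n K x) (\<lambda>z. (f n z - f 0 x)^2 + b^2)"
    unfolding bind using step supp by (intro integral_mono_AE) (auto simp: int AE_measure_pmf_iff)
  also have "\<dots> \<le> real (Suc n) * b^2"
    using IH2 by (simp add: int algebra_simps)
  finally have A2: "measure_pmf.expectation (iter_kernel (Suc n) K x) (\<lambda>y. (f (Suc n) y - f 0 x)^2)
      \<le> real (Suc n) * b^2" .
  have "measure_pmf.expectation (iter_kernel (Suc n) K x) (\<lambda>y. (f (Suc n) y - f 0 x)^4)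
      \<le> measure_pmf.expectation (iter_kernel n K x)
          (\<lambda>z. (f n z - f 0 x)^4 + 8 * b^2 * (f n z - f 0 x)^2 + 3 * b^4)"
    unfolding bind using step supp by (intro integral_mono_AE) (auto simp: int AE_measure_pmf_iff)
  also have "\<dots> = measure_pmf.expectation (iter_kernel n K x) (\<lambda>z. (f n z - f 0 x)^4)
        + 8 * b^2 * measure_pmf.expectation (iter_kernel n K x) (\<lambda>z. (f n z - f 0 x)^2) + 3 * b^4"
    by (simp add: int)
  also have "\<dots> \<le> 4 * real n^2 * b^4 + 8 * b^2 * (real n * b^2) + 3 * b^4"
    using IH2 IH4 by (intro add_mono mult_left_mono) auto
  also have "\<dots> \<le> 4 * real (Suc n)^2 * b^4"
    using b0 by (simp add: power2_eq_square power4_eq_xxxx algebra_simps)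
  finally show ?case using A2 by simp
qed

section \<open>Trajectories\<close>

lemma length_path_pmf: "xs \<in> set_pmf (path_pmf K mu L) \<Longrightarrow> length xs = Suc L"
  by (induction L arbitrary: xs) auto

lemma path_pmf_first_nth:
  assumes "n \<le> L"
  shows "map_pmf (\<lambda>p. (p ! 0, p ! n)) (path_pmf K mu L)
       = bind_pmf mu (\<lambda>x. map_pmf (Pair x) (iter_kernel n K x))"
  using assms
proof (induction L arbitrary: n)
  case 0
  then have "map_pmf (\<lambda>p. (p ! 0, p ! n)) (path_pmf K mu 0) = map_pmf (\<lambda>x. (x, x)) mu"
    by (simp add: map_pmf_comp)
  also have "\<dots> = bind_pmf mu (\<lambda>x. return_pmf (x, x))"
    by (simp add: map_pmf_def)
  finally show ?case
    using 0 by simp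
next
  case (Suc L)
  let ?P = "path_pmf K mu L"
  have step: "map_pmf (\<lambda>p. (p ! 0, p ! n)) (path_pmf K mu (Suc L))
      = bind_pmf ?P (\<lambda>xs. map_pmf (\<lambda>y. ((xs @ [y]) ! 0, (xs @ [y]) ! n)) (K (xs ! L)))"
  proof -
    have "last xs = xs ! L" if "xs \<in> set_pmf ?P" for xs
      using length_path_pmf[OF that] by (metis diff_Suc_1 last_conv_nth list.size(3) nat.distinct(1))
    then show ?thesis
      by (auto simp: map_bind_pmf map_pmf_comp intro: bind_pmf_cong)
  qed
  show ?case
  proof (cases "n \<le> L")
    case True
    have "map_pmf (\<lambda>p. (p ! 0, p ! n)) (path_pmf K mu (Suc L))
        = bind_pmf ?P (\<lambda>xs. return_pmf (xs ! 0, xs ! n))"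
      unfolding step
      by (rule bind_pmf_cong[OF refl])
         (use True in \<open>auto simp: nth_append simp flip: length_greater_0_conv dest!: length_path_pmf\<close>)
    also have "\<dots> = map_pmf (\<lambda>p. (p ! 0, p ! n)) ?P"
      by (simp add: map_pmf_def)
    finally show ?thesis
      using Suc.IH[OF True] by simp
  next
    case False
    then have n: "n = Suc L"
      using Suc.prems by simp
    have "map_pmf (\<lambda>p. (p ! 0, p ! n)) (path_pmf K mu (Suc L))
        = bind_pmf ?P (\<lambda>xs. map_pmf (Pair (xs ! 0)) (K (xs ! L)))"
      unfolding step
      by (rule bind_pmf_cong[OF refl])
         (auto simp: n nth_append simp flip: length_greater_0_conv dest!: length_path_pmf)
    also have "\<dots> = bind_pmf (map_pmf (\<lambda>p. (p ! 0, p ! L)) ?P) (\<lambda>(a, b). map_pmf (Pair a) (K b))"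
      by (simp add: bind_map_pmf)
    also have "\<dots> = bind_pmf mu (\<lambda>x. bind_pmf (iter_kernel L K x) (\<lambda>b. map_pmf (Pair x) (K b)))"
      by (simp add: Suc.IH bind_assoc_pmf bind_map_pmf)
    also have "\<dots> = bind_pmf mu (\<lambda>x. map_pmf (Pair x) (iter_kernel (Suc L) K x))"
      by (simp only: iter_kernel_Suc_right map_bind_pmf)
    finally show ?thesis
      using n by simp
  qed
qed

lemma prob_path_pmf_first:
  "measure_pmf.prob (path_pmf K mu L) {p. P (p ! 0)} = measure_pmf.prob mu {x. P x}"
proof -
  have "map_pmf (\<lambda>p. p ! 0) (path_pmf K mu L)
      = map_pmf fst (map_pmf (\<lambda>p. (p ! 0, p ! 0)) (path_pmf K mu L))"
    by (simp add: map_pmf_comp)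
  also have "\<dots> = mu"
    by (simp add: path_pmf_first_nth map_bind_pmf bind_return_pmf')
  finally have "map_pmf (\<lambda>p. p ! 0) (path_pmf K mu L) = mu" .
  then show ?thesis
    by (metis (no_types) measure_map_pmf vimage_Collect_eq)
qed

lemma prob_path_pmf_first_nth_le:
  assumes n: "n \<le> L" and c: "0 \<le> c"
    and bound: "\<And>x. x \<in> set_pmf mu \<Longrightarrow> measure_pmf.prob (iter_kernel n K x) {y. Q x y} \<le> c"
  shows "measure_pmf.prob (path_pmf K mu L) {p. Q (p ! 0) (p ! n)} \<le> c"
proof -
  let ?Z = "{z. Q (fst z) (snd z)}"
  let ?J = "bind_pmf mu (\<lambda>x. map_pmf (Pair x) (iter_kernel n K x))"
  have eq: "measure_pmf.prob (path_pmf K mu L) {p. Q (p ! 0) (p ! n)} = measure_pmf.prob ?J ?Z"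
    by (simp flip: path_pmf_first_nth[OF n] add: vimage_def)
  have "emeasure (measure_pmf ?J) ?Z
      = (\<integral>\<^sup>+x. emeasure (measure_pmf (map_pmf (Pair x) (iter_kernel n K x))) ?Z \<partial>mu)"
    by simp
  also have "\<dots> \<le> (\<integral>\<^sup>+x. ennreal c \<partial>mu)"
    using bound by (intro nn_integral_mono_AE)
      (auto simp: AE_measure_pmf_iff measure_pmf.emeasure_eq_measure vimage_def ennreal_leI)
  also have "\<dots> = ennreal c"
    by (simp add: measure_pmf.emeasure_space_1)
  finally show ?thesis
    using eq c by (simp add: measure_pmf.emeasure_eq_measure)
qed

section \<open>The Euler scheme of the mean-field equation\<close>

lemma abs_le_vnorm: "i \<le> k \<Longrightarrow> \<bar>v i\<bar> \<le> vnorm k v"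
  unfolding vnorm_def by (rule Max_ge) auto

lemma vnorm_le: "(\<And>i. i \<le> k \<Longrightarrow> \<bar>v i\<bar> \<le> c) \<Longrightarrow> vnorm k v \<le> c"
  unfolding vnorm_def by (subst Max_le_iff) auto

lemma vnorm_nonneg: "0 \<le> vnorm k v"
  using abs_le_vnorm[of 0 k v] by simp

lemma abs_ode_rhs_le:
  assumes k: "k \<ge> 1" and i: "i \<le> k"
  shows "\<bar>ode_rhs lam k v i\<bar> \<le> 3 * real lam * vnorm k v"
proof -
  let ?V = "vnorm k v"
  have V: "\<And>j. j \<le> k \<Longrightarrow> \<bar>v j\<bar> \<le> ?V"
    by (rule abs_le_vnorm)
  have scaled: "\<bar>a * b\<bar> \<le> ?V" if "\<bar>a\<bar> \<le> 1" "\<bar>b\<bar> \<le> ?V" for a b :: real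
  proof -
    have "\<bar>a * b\<bar> = \<bar>a\<bar> * \<bar>b\<bar>"
      by (simp add: abs_mult)
    also have "\<dots> \<le> 1 * ?V"
      by (intro mult_mono that) auto
    finally show ?thesis by simp
  qed
  have sum3: "\<bar>real lam * (x + y + z)\<bar> \<le> 3 * real lam * ?V"
    if "\<bar>x\<bar> \<le> ?V" "\<bar>y\<bar> \<le> ?V" "\<bar>z\<bar> \<le> ?V" for x y z
  proof -
    have "real lam * \<bar>x + y + z\<bar> \<le> real lam * (3 * ?V)"
      using that by (intro mult_left_mono) auto
    then show ?thesis by (simp add: abs_mult)
  qed
  have kr: "real k \<ge> 1" and inv_k: "\<bar>1 / real k\<bar> \<le> 1"
    using k by simp_all
  consider "i = 0" | "i \<noteq> 0" "i = k" | "i \<noteq> 0" "i \<noteq> k"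
    by blast
  then show ?thesis
  proof cases
    case 1
    then have "ode_rhs lam k v i = real lam * (- v 0 + 1 / real k * v 1 + 0)"
      by (simp add: ode_rhs_def algebra_simps)
    then show ?thesis
      by (simp only:) (rule sum3; use V[of 0] scaled[OF inv_k V[of 1]] k vnorm_nonneg[of k v] in auto)
  next
    case 2
    then have "ode_rhs lam k v i = real lam * (- v k + 1 / real k * v (k - 1) + 0)"
      by (simp add: ode_rhs_def algebra_simps)
    then show ?thesis
      by (simp only:) (rule sum3; use V[of k] scaled[OF inv_k V[of "k - 1"]] vnorm_nonneg[of k v] in auto)
  next
    case 3
    then have "ode_rhs lam k v i = real lam * (- v i + real (k - i + 1) / real k * v (i - 1)
        + real (i + 1) / real k * v (i + 1))"
      by (simp add: ode_rhs_def algebra_simps)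
    moreover have down: "\<bar>real (k - i + 1) / real k\<bar> \<le> 1" and up: "\<bar>real (i + 1) / real k\<bar> \<le> 1"
      using 3 i kr by simp_all
    ultimately show ?thesis
      by (simp only:)
         (rule sum3; use V[of i] scaled[OF down V[of "i - 1"]] scaled[OF up V[of "i + 1"]] i 3 in auto)
  qed
qed

lemma ode_rhs_diff: "ode_rhs lam k (\<lambda>j. u j - w j) i = ode_rhs lam k u i - ode_rhs lam k w i"
  by (simp add: ode_rhs_def right_diff_distrib)

lemma ode_rhs_cong:
  "(\<And>l. l \<le> k \<Longrightarrow> u l = w l) \<Longrightarrow> i \<le> k \<Longrightarrow> ode_rhs lam k u i = ode_rhs lam k w i"
  by (simp add: ode_rhs_def)

lemma expectation_ode_rhs:
  assumes "finite (set_pmf M)"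
  shows "measure_pmf.expectation M (\<lambda>y. ode_rhs lam k (g y) i)
       = ode_rhs lam k (\<lambda>l. measure_pmf.expectation M (\<lambda>y. g y l)) i"
  unfolding ode_rhs_def by (simp add: integrable_measure_pmf_finite[OF assms])

definition euler_step :: "nat \<Rightarrow> nat \<Rightarrow> real \<Rightarrow> (nat \<Rightarrow> real) \<Rightarrow> nat \<Rightarrow> real" where
  "euler_step lam k h v = (\<lambda>i. v i + h * ode_rhs lam k v i)"

lemma euler_step_apply: "euler_step lam k h v i = v i + h * ode_rhs lam k v i"
  by (simp add: euler_step_def)

lemma euler_iter_Suc:
  "(euler_step lam k h ^^ Suc n) v i
     = (euler_step lam k h ^^ n) v i + h * ode_rhs lam k ((euler_step lam k h ^^ n) v) i"
  unfolding funpow.simps(2) comp_apply by (rule euler_step_apply)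

lemma euler_iter_diff:
  "(euler_step lam k h ^^ n) (\<lambda>j. u j - w j)
     = (\<lambda>j. (euler_step lam k h ^^ n) u j - (euler_step lam k h ^^ n) w j)"
proof (induction n)
  case 0
  then show ?case by simp
next
  case (Suc n)
  show ?case
    by (rule ext) (simp add: euler_iter_Suc Suc.IH ode_rhs_diff algebra_simps del: funpow.simps(2))
qed

lemma euler_iter_cong:
  "(\<And>l. l \<le> k \<Longrightarrow> u l = w l) \<Longrightarrow> i \<le> k
     \<Longrightarrow> (euler_step lam k h ^^ n) u i = (euler_step lam k h ^^ n) w i"
proof (induction n arbitrary: i)
  case 0
  then show ?case by simp
next
  case (Suc n)
  then have "ode_rhs lam k ((euler_step lam k h ^^ n) u) i = ode_rhs lam k ((euler_step lam k h ^^ n) w) i"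
    by (intro ode_rhs_cong) auto
  then show ?case
    using Suc by (simp add: euler_iter_Suc del: funpow.simps(2))
qed

lemma expectation_euler_iter:
  assumes "finite (set_pmf M)"
  shows "measure_pmf.expectation M (\<lambda>y. (euler_step lam k h ^^ n) (g y) i)
       = (euler_step lam k h ^^ n) (\<lambda>l. measure_pmf.expectation M (\<lambda>y. g y l)) i"
proof (induction n arbitrary: i)
  case 0
  then show ?case by simp
next
  case (Suc n)
  then show ?case
    by (simp add: euler_iter_Suc integrable_measure_pmf_finite[OF assms]
        expectation_ode_rhs[OF assms] del: funpow.simps(2))
qed

lemma vnorm_euler_step_le:
  assumes "k \<ge> 1" and "h \<ge> 0"
  shows "vnorm k (euler_step lam k h v) \<le> (1 + 3 * real lam * h) * vnorm k v"
proof (rule vnorm_le)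
  fix i assume i: "i \<le> k"
  have "\<bar>euler_step lam k h v i\<bar> \<le> \<bar>v i\<bar> + h * \<bar>ode_rhs lam k v i\<bar>"
    using assms by (simp add: euler_step_apply abs_mult order.trans[OF abs_triangle_ineq])
  also have "\<dots> \<le> vnorm k v + h * (3 * real lam * vnorm k v)"
    using assms i by (intro add_mono mult_left_mono abs_le_vnorm abs_ode_rhs_le) auto
  finally show "\<bar>euler_step lam k h v i\<bar> \<le> (1 + 3 * real lam * h) * vnorm k v"
    by (simp add: algebra_simps)
qed

lemma vnorm_euler_iter_le:
  assumes "k \<ge> 1" and "h \<ge> 0"
  shows "vnorm k ((euler_step lam k h ^^ n) v) \<le> (1 + 3 * real lam * h) ^ n * vnorm k v"
proof (induction n)
  case 0
  then show ?case by simp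
next
  case (Suc n)
  have "vnorm k ((euler_step lam k h ^^ Suc n) v)
      \<le> (1 + 3 * real lam * h) * vnorm k ((euler_step lam k h ^^ n) v)"
    using vnorm_euler_step_le[OF assms] by simp
  also have "\<dots> \<le> (1 + 3 * real lam * h) * ((1 + 3 * real lam * h) ^ n * vnorm k v)"
    using Suc assms by (intro mult_left_mono) auto
  finally show ?case by simp
qed

lemma one_plus_power_le_exp:
  fixes x :: real
  assumes "0 \<le> x"
  shows "(1 + x) ^ n \<le> exp (real n * x)"
proof -
  have "(1 + x) ^ n \<le> exp x ^ n"
    using assms by (intro power_mono) (auto simp: add.commute)
  then show ?thesis
    by (simp add: exp_of_nat_mult)
qed

section \<open>Solutions of the mean-field equation\<close>

definition mean_field_solution :: "nat \<Rightarrow> nat \<Rightarrow> (real \<Rightarrow> nat \<Rightarrow> real) \<Rightarrow> bool" where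
  "mean_field_solution lam k s \<longleftrightarrow>
     (\<forall>t\<ge>0. \<forall>i\<le>k. ((\<lambda>u. s u i) has_real_derivative ode_rhs lam k (s t) i) (at t within {0..}))"

lemma mean_field_solution_derivative:
  assumes "mean_field_solution lam k s" "i \<le> k" "S \<subseteq> {0..}" "t \<in> S"
  shows "((\<lambda>u. s u i) has_real_derivative ode_rhs lam k (s t) i) (at t within S)"
  using assms unfolding mean_field_solution_def by (auto intro: DERIV_subset)

lemma mean_field_solution_bounded:
  assumes sol: "mean_field_solution lam k s"
  obtains B where "B \<ge> 0" "\<And>t. t \<in> {0..T} \<Longrightarrow> vnorm k (s t) \<le> B"
proof -
  have "bounded ((\<lambda>u. s u i) ` {0..T})" if i: "i \<le> k" for i
  proof -
    have "continuous_on {0..T} (\<lambda>u. s u i)"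
      by (rule DERIV_continuous_on) (rule mean_field_solution_derivative[OF sol i], auto)
    then show ?thesis
      by (intro compact_imp_bounded compact_continuous_image) simp_all
  qed
  then obtain C where C: "\<And>i t. i \<le> k \<Longrightarrow> t \<in> {0..T} \<Longrightarrow> \<bar>s t i\<bar> \<le> C i"
    unfolding bounded_iff by (metis image_eqI real_norm_def)
  define B where "B = (\<Sum>i\<le>k. \<bar>C i\<bar>)"
  have "vnorm k (s t) \<le> B" if t: "t \<in> {0..T}" for t
  proof (rule vnorm_le)
    fix i assume i: "i \<le> k"
    have "\<bar>s t i\<bar> \<le> \<bar>C i\<bar>"
      using C[OF i t] by simp
    also have "\<dots> \<le> B"
      unfolding B_def using i by (intro member_le_sum) auto
    finally show "\<bar>s t i\<bar> \<le> B" .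
  qed
  moreover have "B \<ge> 0"
    unfolding B_def by (simp add: sum_nonneg)
  ultimately show ?thesis
    using that by blast
qed

lemma mean_field_solution_lipschitz:
  assumes sol: "mean_field_solution lam k s" and k: "k \<ge> 1"
    and B: "\<And>t. t \<in> {0..T} \<Longrightarrow> vnorm k (s t) \<le> B"
    and u: "u \<in> {0..T}" and t: "t \<in> {0..T}"
  shows "vnorm k (\<lambda>l. s u l - s t l) \<le> 3 * real lam * B * \<bar>u - t\<bar>"
proof (rule vnorm_le)
  fix i assume i: "i \<le> k"
  have "norm (s u i - s t i) \<le> (3 * real lam * B) * norm (u - t)"
  proof (rule field_differentiable_bound[where S="{0..T}" and f'="\<lambda>z. ode_rhs lam k (s z) i"])
    show "((\<lambda>u. s u i) has_field_derivative ode_rhs lam k (s z) i) (at z within {0..T})"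
      if "z \<in> {0..T}" for z
      using that by (intro mean_field_solution_derivative[OF sol i]) auto
    show "norm (ode_rhs lam k (s z) i) \<le> 3 * real lam * B" if z: "z \<in> {0..T}" for z
      using abs_ode_rhs_le[OF k i, of lam "s z"] B[OF z]
      by (simp add: order.trans[OF _ mult_left_mono])
  qed (use u t in auto)
  then show "\<bar>s u i - s t i\<bar> \<le> 3 * real lam * B * \<bar>u - t\<bar>"
    by simp
qed

lemma mean_field_solution_local_error:
  assumes sol: "mean_field_solution lam k s" and k: "k \<ge> 1"
    and B: "\<And>t. t \<in> {0..T} \<Longrightarrow> vnorm k (s t) \<le> B"
    and i: "i \<le> k" and h: "h \<ge> 0" and t: "t \<ge> 0" and th: "t + h \<le> T"
  shows "\<bar>s (t + h) i - s t i - h * ode_rhs lam k (s t) i\<bar> \<le> 9 * real lam ^ 2 * B * h ^ 2"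
proof -
  let ?c = "ode_rhs lam k (s t) i"
  have B0: "B \<ge> 0"
    using B[of t] vnorm_nonneg[of k "s t"] t th h by force
  have "norm ((s (t + h) i - (t + h) * ?c) - (s t i - t * ?c)) \<le> (9 * real lam ^ 2 * B * h) * norm ((t + h) - t)"
  proof (rule field_differentiable_bound[where S="{t..t+h}" and f'="\<lambda>z. ode_rhs lam k (s z) i - ?c"])
    show "((\<lambda>u. s u i - u * ?c) has_field_derivative ode_rhs lam k (s z) i - ?c) (at z within {t..t+h})"
      if z: "z \<in> {t..t+h}" for z
      by (rule derivative_eq_intros mean_field_solution_derivative[OF sol i] | use z t in auto)+
    show "norm (ode_rhs lam k (s z) i - ?c) \<le> 9 * real lam ^ 2 * B * h" if z: "z \<in> {t..t+h}" for z
    proof -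
      have zt: "z \<in> {0..T}" "t \<in> {0..T}"
        using z t th h by auto
      have "\<bar>ode_rhs lam k (s z) i - ?c\<bar> \<le> 3 * real lam * vnorm k (\<lambda>l. s z l - s t l)"
        using abs_ode_rhs_le[OF k i] by (simp flip: ode_rhs_diff)
      also have "\<dots> \<le> 3 * real lam * (3 * real lam * B * h)"
      proof (intro mult_left_mono)
        have "3 * real lam * B * \<bar>z - t\<bar> \<le> 3 * real lam * B * h"
          using z B0 by (intro mult_left_mono) auto
        then show "vnorm k (\<lambda>l. s z l - s t l) \<le> 3 * real lam * B * h"
          using mean_field_solution_lipschitz[OF sol k B zt] by linarith
      qed auto
      finally show ?thesis
        by (simp add: power2_eq_square algebra_simps)
    qed
  qed (use h in auto)
  then show ?thesis
    using h by (simp add: power2_eq_square algebra_simps)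
qed

text \<open>The local errors \<open>O(h\<^sup>2)\<close> are amplified by at most \<open>(1 + 3 \<lambda> h)\<^sup>j\<close>.\<close>

lemma euler_global_error:
  assumes sol: "mean_field_solution lam k s" and k: "k \<ge> 1" and h: "h > 0"
    and B: "\<And>t. t \<in> {0..T} \<Longrightarrow> vnorm k (s t) \<le> B"
    and init: "\<And>i. i \<le> k \<Longrightarrow> s 0 i = m i"
    and jT: "real j * h \<le> T"
  shows "vnorm k (\<lambda>l. (euler_step lam k h ^^ j) m l - s (real j * h) l)
           \<le> (1 + 3 * real lam * h) ^ j * (real j * (9 * real lam ^ 2 * B * h ^ 2))"
  using jT
proof (induction j)
  case 0
  have "vnorm k (\<lambda>l. (euler_step lam k h ^^ 0) m l - s 0 l) \<le> 0"
    by (rule vnorm_le) (simp add: init)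
  then show ?case by simp
next
  case (Suc j)
  define t where "t = real j * h"
  define C where "C = 9 * real lam ^ 2 * B * h ^ 2"
  define q where "q = 1 + 3 * real lam * h"
  define e where "e = (\<lambda>l. (euler_step lam k h ^^ j) m l - s t l)"
  have tSuc: "real (Suc j) * h = t + h"
    by (simp add: t_def algebra_simps)
  have tT: "t + h \<le> T" and t0: "0 \<le> t"
    using Suc.prems h tSuc by (simp_all add: t_def)
  have IH: "vnorm k e \<le> q ^ j * (real j * C)"
    using Suc.IH tT h by (simp add: e_def t_def C_def q_def)
  have q1: "1 \<le> q" and C0: "0 \<le> C"
    using h B[of t] vnorm_nonneg[of k "s t"] t0 tT by (auto simp: q_def C_def)
  have "vnorm k (\<lambda>l. (euler_step lam k h ^^ Suc j) m l - s (t + h) l)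
      \<le> vnorm k (euler_step lam k h e) + C"
  proof (rule vnorm_le)
    fix l assume l: "l \<le> k"
    have "(euler_step lam k h ^^ Suc j) m l - s (t + h) l
        = euler_step lam k h e l - (s (t + h) l - s t l - h * ode_rhs lam k (s t) l)"
      by (simp add: euler_iter_Suc euler_step_apply e_def ode_rhs_diff algebra_simps
          del: funpow.simps(2))
    moreover have "\<bar>s (t + h) l - s t l - h * ode_rhs lam k (s t) l\<bar> \<le> C"
      unfolding C_def using h t0 tT by (intro mean_field_solution_local_error[OF sol k B l]) auto
    ultimately show "\<bar>(euler_step lam k h ^^ Suc j) m l - s (t + h) l\<bar> \<le> vnorm k (euler_step lam k h e) + C"
      using abs_le_vnorm[OF l, of "euler_step lam k h e"] by linarith
  qed
  also have "\<dots> \<le> q * (q ^ j * (real j * C)) + C"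
    using vnorm_euler_step_le[OF k, of h lam e] IH h q1 unfolding q_def
    by (smt (verit) mult_left_mono)
  also have "\<dots> \<le> q ^ Suc j * (real (Suc j) * C)"
  proof -
    have "C \<le> q ^ Suc j * C"
      using C0 one_le_power[OF q1, of "Suc j"] by (simp add: mult_le_cancel_right1)
    then show ?thesis
      by (simp add: algebra_simps)
  qed
  finally show ?case
    unfolding tSuc C_def q_def .
qed

section \<open>One request\<close>

definition configs :: "nat \<Rightarrow> nat \<Rightarrow> nat list set" where
  "configs N k = {xs. set xs \<subseteq> {..k} \<and> length xs = N}"

definition up_prob :: "nat \<Rightarrow> nat \<Rightarrow> real" where
  "up_prob k v = real (k - v) / real k"

text \<open>Expected change of the indicator of state \<open>i\<close> when a block in state \<open>v\<close> is hit; at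
  \<open>v = 0\<close> the truncated \<open>v - 1\<close> is harmless because \<open>up_prob k 0 = 1\<close>.\<close>

definition count_change :: "nat \<Rightarrow> nat \<Rightarrow> nat \<Rightarrow> real" where
  "count_change k i v =
     up_prob k v * ((if v + 1 = i then 1 else 0) - (if v = i then 1 else 0))
     + (1 - up_prob k v) * ((if v - 1 = i then 1 else 0) - (if v = i then 1 else 0))"

lemma finite_configs: "finite (configs N k)"
  unfolding configs_def by (rule finite_lists_length_eq) simp

lemma up_prob_bounds: "k \<ge> 1 \<Longrightarrow> 0 \<le> up_prob k v \<and> up_prob k v \<le> 1"
  by (auto simp: up_prob_def)

lemma real_count_list_update:
  assumes "j < length xs"
  shows "real (count_list (xs[j := v]) i)
       = real (count_list xs i) - (if xs ! j = i then 1 else 0) + (if v = i then 1 else 0)"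
proof -
  have "count_list (xs[j := v]) i = count (add_mset v (mset xs - {#xs ! j#})) i"
    using assms by (simp add: mset_update flip: count_mset)
  moreover have "count (mset xs) (xs ! j) \<ge> 1"
    using assms by (simp add: Suc_le_eq)
  ultimately show ?thesis
    by (auto simp: count_mset)
qed

lemma vnorm_frac_le_one:
  assumes "length xs = N"
  shows "vnorm k (frac N xs) \<le> 1"
proof (rule vnorm_le)
  fix i
  have "count_list xs i \<le> length xs"
    by (induction xs) auto
  then show "\<bar>frac N xs i\<bar> \<le> 1"
    using assms by (cases "N = 0") (simp_all add: frac_def)
qed

lemma abs_frac_update_le:
  assumes "j < length xs"
  shows "\<bar>frac N (xs[j := v]) i - frac N xs i\<bar> \<le> 1 / real N"
proof -
  have "frac N (xs[j := v]) i - frac N xs i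
      = (real (count_list (xs[j := v]) i) - real (count_list xs i)) / real N"
    by (simp add: frac_def diff_divide_distrib)
  also have "\<dots> = ((if v = i then 1 else 0) - (if xs ! j = i then 1 else 0)) / real N"
    by (simp add: real_count_list_update[OF assms])
  finally have "frac N (xs[j := v]) i - frac N xs i
      = ((if v = i then 1 else 0) - (if xs ! j = i then 1 else 0)) / real N" .
  then show ?thesis
    by auto
qed

lemma set_pmf_request:
  assumes xs: "xs \<in> configs N k" and N: "N > 0" and k: "k \<ge> 1"
    and y: "y \<in> set_pmf (request N k xs)"
  shows "y \<in> configs N k" and "\<exists>j<N. \<exists>v. y = xs[j := v]"
proof -
  have U: "set_pmf (pmf_of_set {..<N}) = {..<N}"
    using N by (intro set_pmf_of_set) auto
  from y obtain j up where j: "j < N"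
    and up: "up \<in> set_pmf (bernoulli_pmf (up_prob k (xs ! j)))"
    and y_eq: "y = xs[j := (if up then xs ! j + 1 else xs ! j - 1)]"
    by (auto simp: request_def U up_prob_def)
  then show "\<exists>j<N. \<exists>v. y = xs[j := v]"
    by blast
  have xs_j: "xs ! j \<le> k"
    using xs j nth_mem by (fastforce simp: configs_def)
  have "xs ! j < k" if up
  proof -
    have "up_prob k (xs ! j) \<noteq> 0"
      using up that up_prob_bounds[OF k, of "xs ! j"] by (auto simp: set_pmf_iff)
    then show ?thesis
      by (auto simp: up_prob_def)
  qed
  then have "(if up then xs ! j + 1 else xs ! j - 1) \<le> k"
    using xs_j by auto
  then show "y \<in> configs N k"
    using xs y_eq j by (auto simp: configs_def dest!: set_update_subset_insert[THEN subsetD])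
qed

lemma finite_set_pmf_request:
  "xs \<in> configs N k \<Longrightarrow> N > 0 \<Longrightarrow> k \<ge> 1 \<Longrightarrow> finite (set_pmf (request N k xs))"
  using set_pmf_request(1) finite_configs by (metis finite_subset subsetI)

lemma sum_nth_eq_sum_count_list:
  fixes g :: "nat \<Rightarrow> real"
  assumes "set xs \<subseteq> {..k}"
  shows "(\<Sum>j<length xs. g (xs ! j)) = (\<Sum>v\<le>k. real (count_list xs v) * g v)"
  using assms
proof (induction xs)
  case Nil
  then show ?case by simp
next
  case (Cons a xs)
  then have a: "a \<le> k" and IH: "(\<Sum>j<length xs. g (xs ! j)) = (\<Sum>v\<le>k. real (count_list xs v) * g v)"
    by auto
  have "(\<Sum>j<length (a # xs). g ((a # xs) ! j)) = g a + (\<Sum>j<length xs. g (xs ! j))"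
    by (simp only: length_Cons sum.lessThan_Suc_shift nth_Cons_0 nth_Cons_Suc)
  also have "\<dots> = (\<Sum>v\<le>k. real (count_list xs v) * g v + (if a = v then g v else 0))"
    using a by (simp add: IH sum.distrib)
  also have "\<dots> = (\<Sum>v\<le>k. real (count_list (a # xs) v) * g v)"
    by (intro sum.cong) (auto simp: algebra_simps)
  finally show ?case .
qed

lemma ode_rhs_eq_sum_count_change:
  assumes k: "k \<ge> 1" and i: "i \<le> k"
  shows "ode_rhs lam k v i = real lam * (\<Sum>l\<le>k. v l * count_change k i l)"
proof -
  let ?p = "up_prob k"
  have cc: "count_change k i l = - (if l = i then 1 else 0) + (if 0 < i \<and> l = i - 1 then ?p l else 0)
      + (if l = i + 1 then 1 - ?p l else 0)" for l
    using k by (cases "l = 0") (auto simp: count_change_def up_prob_def algebra_simps)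
  have sum: "(\<Sum>l\<le>k. v l * count_change k i l)
      = - v i + (if 0 < i then v (i - 1) * ?p (i - 1) else 0)
        + (if i + 1 \<le> k then v (i + 1) * (1 - ?p (i + 1)) else 0)"
    using i by (simp add: cc distrib_left sum.distrib if_distrib[of "(*) (v _)"]
        if_distrib[of uminus] cong: if_cong)
  have "ode_rhs lam k v i = real lam * (- v i + (if 0 < i then v (i - 1) * ?p (i - 1) else 0)
        + (if i + 1 \<le> k then v (i + 1) * (1 - ?p (i + 1)) else 0))"
    using i k by (cases "i = 0"; cases "i = k")
      (auto simp: ode_rhs_def up_prob_def field_simps)
  then show ?thesis
    unfolding sum .
qed

lemma expectation_request_frac:
  assumes xs: "xs \<in> configs N k" and N: "N > 0" and k: "k \<ge> 1" and lam: "lam \<ge> 1" and i: "i \<le> k"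
  shows "measure_pmf.expectation (request N k xs) (\<lambda>y. frac N y i)
       = euler_step lam k (1 / (real lam * real N)) (frac N xs) i"
proof -
  let ?p = "up_prob k"
  let ?U = "pmf_of_set {..<N}"
  let ?flip = "\<lambda>j. map_pmf (\<lambda>up. xs[j := (if up then xs ! j + 1 else xs ! j - 1)]) (bernoulli_pmf (?p (xs ! j)))"
  have len: "length xs = N" and sub: "set xs \<subseteq> {..k}"
    using xs by (auto simp: configs_def)
  have U: "set_pmf ?U = {..<N}"
    using N by (intro set_pmf_of_set) auto
  have req: "request N k xs = bind_pmf ?U ?flip"
    by (simp add: request_def up_prob_def)
  have flip: "measure_pmf.expectation (?flip j) (\<lambda>y. frac N y i) = frac N xs i + count_change k i (xs ! j) / real N"
    if j: "j < N" for j
  proof -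
    have "measure_pmf.expectation (?flip j) (\<lambda>y. frac N y i)
        = ?p (xs ! j) * frac N (xs[j := xs ! j + 1]) i + (1 - ?p (xs ! j)) * frac N (xs[j := xs ! j - 1]) i"
      using up_prob_bounds[OF k, of "xs ! j"] by simp
    also have "\<dots> = frac N xs i + count_change k i (xs ! j) / real N"
      using j len N by (simp add: frac_def real_count_list_update count_change_def field_simps)
    finally show ?thesis .
  qed
  have "measure_pmf.expectation (request N k xs) (\<lambda>y. frac N y i)
      = measure_pmf.expectation ?U (\<lambda>j. measure_pmf.expectation (?flip j) (\<lambda>y. frac N y i))"
    unfolding req
    by (rule expectation_bind_pmf_finite[OF finite_configs])
       (use set_pmf_request(1)[OF xs N k] in \<open>auto simp: req U\<close>)
  also have "\<dots> = measure_pmf.expectation ?U (\<lambda>j. frac N xs i + count_change k i (xs ! j) / real N)"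
    by (rule integral_cong_AE) (simp_all add: AE_measure_pmf_iff U flip del: integral_map_pmf)
  also have "\<dots> = (\<Sum>j<N. frac N xs i + count_change k i (xs ! j) / real N) / real N"
    by (subst integral_pmf_of_set) (use N in auto)
  also have "\<dots> = frac N xs i + (\<Sum>j<N. count_change k i (xs ! j)) / real N ^ 2"
    using N by (simp add: sum.distrib power2_eq_square field_simps flip: sum_divide_distrib)
  also have "(\<Sum>j<N. count_change k i (xs ! j)) = real N * (\<Sum>l\<le>k. frac N xs l * count_change k i l)"
    using sum_nth_eq_sum_count_list[OF sub, of "count_change k i"] len N
    by (simp add: frac_def sum_distrib_left)
  also have "frac N xs i + real N * (\<Sum>l\<le>k. frac N xs l * count_change k i l) / real N ^ 2
      = euler_step lam k (1 / (real lam * real N)) (frac N xs) i"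
    using N lam by (simp add: euler_step_apply ode_rhs_eq_sum_count_change[OF k i] power2_eq_square)
  finally show ?thesis .
qed

section \<open>Concentration along the request chain\<close>

lemma vnorm_frac_request_minus_euler_step_le:
  assumes z: "z \<in> configs N k" and N: "N > 0" and k: "k \<ge> 1" and lam: "lam \<ge> 1"
    and y: "y \<in> set_pmf (request N k z)"
  shows "vnorm k (\<lambda>l. frac N y l - euler_step lam k (1 / (real lam * real N)) (frac N z) l) \<le> 4 / real N"
proof (rule vnorm_le)
  fix l assume l: "l \<le> k"
  obtain j v where j: "j < N" and y_eq: "y = z[j := v]"
    using set_pmf_request(2)[OF z N k y] by blast
  have len: "length z = N"
    using z by (simp add: configs_def)
  have jump: "\<bar>frac N y l - frac N z l\<bar> \<le> 1 / real N"
    unfolding y_eq using j len by (intro abs_frac_update_le) simp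
  have "\<bar>ode_rhs lam k (frac N z) l\<bar> \<le> 3 * real lam * vnorm k (frac N z)"
    by (rule abs_ode_rhs_le[OF k l])
  also have "\<dots> \<le> 3 * real lam"
    using vnorm_frac_le_one[OF len, of k] by (simp add: mult_left_le)
  finally have "\<bar>ode_rhs lam k (frac N z) l\<bar> / (real lam * real N) \<le> 3 * real lam / (real lam * real N)"
    using N lam by (intro divide_right_mono) auto
  then have drift: "\<bar>ode_rhs lam k (frac N z) l / (real lam * real N)\<bar> \<le> 3 / real N"
    using lam by simp
  have "\<bar>frac N y l - euler_step lam k (1 / (real lam * real N)) (frac N z) l\<bar>
      = \<bar>(frac N y l - frac N z l) - ode_rhs lam k (frac N z) l / (real lam * real N)\<bar>"
    by (simp add: euler_step_apply)
  also have "\<dots> \<le> \<bar>frac N y l - frac N z l\<bar> + \<bar>ode_rhs lam k (frac N z) l / (real lam * real N)\<bar>"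
    by (rule abs_triangle_ineq4)
  also have "\<dots> \<le> 1 / real N + 3 / real N"
    using jump drift by (rule add_mono)
  finally show "\<bar>frac N y l - euler_step lam k (1 / (real lam * real N)) (frac N z) l\<bar> \<le> 4 / real N"
    by simp
qed

text \<open>\<open>j \<mapsto> (euler_step ^^ (M - j)) (frac N (X j))\<close> is a martingale for the request chain \<open>X\<close>,
  because the expected occupancy after one request is exactly one Euler step (the drift is
  linear); its increments are \<open>O(1/N)\<close> uniformly in \<open>j \<le> M = O(N)\<close>.\<close>

lemma request_chain_fourth_moment_le:
  assumes x: "x \<in> configs N k" and N: "N > 0" and k: "k \<ge> 1" and lam: "lam \<ge> 1" and i: "i \<le> k"
    and M: "real M \<le> real N * c"
  defines "E \<equiv> euler_step lam k (1 / (real lam * real N))"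
  shows "measure_pmf.expectation (iter_kernel M (request N k) x) (\<lambda>y. (frac N y i - (E ^^ M) (frac N x) i) ^ 4)
           \<le> 4 * real M ^ 2 * (exp (3 * c) * 4 / real N) ^ 4"
proof -
  define f where "f j y = (E ^^ (M - j)) (frac N y) i" for j y
  have rate: "1 + 3 * real lam * (1 / (real lam * real N)) = 1 + 3 / real N"
    using lam by simp
  have inv: "\<And>z. z \<in> configs N k \<Longrightarrow> set_pmf (request N k z) \<subseteq> configs N k"
    using set_pmf_request(1) N k by blast
  have mart: "measure_pmf.expectation (request N k z) (f (Suc j)) = f j z"
    if j: "j < M" and z: "z \<in> configs N k" for j z
  proof -
    have "measure_pmf.expectation (request N k z) (f (Suc j))
        = (E ^^ (M - Suc j)) (\<lambda>l. measure_pmf.expectation (request N k z) (\<lambda>y. frac N y l)) i"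
      unfolding f_def E_def by (rule expectation_euler_iter[OF finite_set_pmf_request[OF z N k]])
    also have "\<dots> = (E ^^ (M - Suc j)) (E (frac N z)) i"
      unfolding E_def by (rule euler_iter_cong[OF _ i]) (rule expectation_request_frac[OF z N k lam])
    also have "\<dots> = f j z"
      using j by (simp add: f_def Suc_diff_Suc flip: funpow_Suc_right[unfolded comp_def, THEN fun_cong])
    finally show ?thesis .
  qed
  have incr: "\<bar>f (Suc j) y - f j z\<bar> \<le> exp (3 * c) * 4 / real N"
    if j: "j < M" and z: "z \<in> configs N k" and y: "y \<in> set_pmf (request N k z)" for j z y
  proof -
    define n where "n = M - Suc j"
    have f_j: "f j z = (E ^^ n) (E (frac N z)) i"
      using j by (simp add: f_def n_def Suc_diff_Suc flip: funpow_Suc_right[unfolded comp_def, THEN fun_cong])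
    have "\<bar>f (Suc j) y - f j z\<bar> \<le> vnorm k ((E ^^ n) (\<lambda>l. frac N y l - E (frac N z) l))"
      unfolding f_j E_def euler_iter_diff using abs_le_vnorm[OF i] by (simp add: f_def n_def E_def)
    also have "\<dots> \<le> (1 + 3 / real N) ^ n * vnorm k (\<lambda>l. frac N y l - E (frac N z) l)"
    proof -
      have "vnorm k ((E ^^ n) w) \<le> (1 + 3 * real lam * (1 / (real lam * real N))) ^ n * vnorm k w" for w
        unfolding E_def by (rule vnorm_euler_iter_le[OF k]) simp
      then show ?thesis
        unfolding rate .
    qed
    also have "\<dots> \<le> exp (3 * c) * (4 / real N)"
    proof (rule mult_mono)
      have "(1 + 3 / real N) ^ n \<le> (1 + 3 / real N) ^ M"
        by (rule power_increasing) (auto simp: n_def)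
      also have "\<dots> \<le> exp (real M * (3 / real N))"
        by (rule one_plus_power_le_exp) simp
      also have "\<dots> \<le> exp (3 * c)"
        using M N by (simp add: field_simps)
      finally show "(1 + 3 / real N) ^ n \<le> exp (3 * c)" .
      show "vnorm k (\<lambda>l. frac N y l - E (frac N z) l) \<le> 4 / real N"
        unfolding E_def by (rule vnorm_frac_request_minus_euler_step_le[OF z N k lam y])
    qed (auto simp: vnorm_nonneg)
    finally show ?thesis by simp
  qed
  have "measure_pmf.expectation (iter_kernel M (request N k) x) (\<lambda>y. (f M y - f 0 x) ^ 4)
      \<le> 4 * real M ^ 2 * (exp (3 * c) * 4 / real N) ^ 4"
    using martingale_moments_le[where S="configs N k" and K="request N k" and f=f and n=M,
        OF finite_configs inv mart incr x order_refl] by blast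
  then show ?thesis
    by (simp add: f_def)
qed

lemma prob_request_chain_deviation_le:
  assumes x: "x \<in> configs N k" and N: "N > 0" and k: "k \<ge> 1" and lam: "lam \<ge> 1" and i: "i \<le> k"
    and M: "real M \<le> real N * c" and \<delta>: "\<delta> > 0"
  defines "E \<equiv> euler_step lam k (1 / (real lam * real N))"
  shows "measure_pmf.prob (iter_kernel M (request N k) x) {y. \<delta> < \<bar>frac N y i - (E ^^ M) (frac N x) i\<bar>}
           \<le> 4 * real M ^ 2 * (exp (3 * c) * 4 / real N) ^ 4 / \<delta> ^ 4"
proof -
  let ?K = "iter_kernel M (request N k) x"
  let ?W = "\<lambda>y. (frac N y i - (E ^^ M) (frac N x) i) ^ 4"
  have fin: "finite (set_pmf ?K)"
    using set_pmf_iter_kernel[OF _ x] set_pmf_request(1)[OF _ N k] finite_configs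
    by (metis finite_subset subsetI)
  have "measure_pmf.prob ?K {y. \<delta> < \<bar>frac N y i - (E ^^ M) (frac N x) i\<bar>}
      \<le> measure_pmf.prob ?K {y \<in> space (measure_pmf ?K). \<delta> ^ 4 \<le> ?W y}"
  proof (intro measure_pmf.finite_measure_mono subsetI)
    fix y assume "y \<in> {y. \<delta> < \<bar>frac N y i - (E ^^ M) (frac N x) i\<bar>}"
    then have "\<delta> ^ 4 \<le> \<bar>frac N y i - (E ^^ M) (frac N x) i\<bar> ^ 4"
      using \<delta> by (intro power_mono) auto
    then show "y \<in> {y \<in> space (measure_pmf ?K). \<delta> ^ 4 \<le> ?W y}"
      by simp
  qed simp
  also have "\<dots> \<le> measure_pmf.expectation ?K ?W / \<delta> ^ 4"
    by (rule integral_Markov_inequality_measure) (use \<delta> integrable_measure_pmf_finite[OF fin] in auto)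
  also have "\<dots> \<le> 4 * real M ^ 2 * (exp (3 * c) * 4 / real N) ^ 4 / \<delta> ^ 4"
    using \<delta> request_chain_fourth_moment_le[OF x N k lam i M] unfolding E_def
    by (intro divide_right_mono) auto
  finally show ?thesis .
qed

section \<open>The fluid limit\<close>

lemma floor_scaled_time_bounds:
  fixes t :: real
  assumes N: "N > 0" and t: "0 \<le> t"
  defines "n \<equiv> nat \<lfloor>real N * t\<rfloor>"
  shows "real n \<le> real N * t" and "real n / real N \<le> t" and "t - 1 / real N < real n / real N"
proof -
  have n: "real n = of_int \<lfloor>real N * t\<rfloor>"
    using N t by (simp add: n_def)
  then show n_le: "real n \<le> real N * t"
    by simp
  then show "real n / real N \<le> t"
    using N by (simp add: divide_le_eq mult.commute)
  have "t - 1 / real N = (real N * t - 1) / real N"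
    using N by (simp add: field_simps)
  also have "\<dots> < real n / real N"
    using n N by (intro divide_strict_right_mono) linarith+
  finally show "t - 1 / real N < real n / real N" .
qed

text \<open>The three error sources: the initial error, amplified by at most \<open>exp (3 \<lambda> T)\<close>; the
  global error of the Euler scheme with step \<open>1 / (\<lambda> N)\<close>; and the time discretisation.\<close>

lemma sup_deviation_le_if_close_to_euler:
  assumes sol: "mean_field_solution lam k s" and k: "k \<ge> 1" and lam: "lam \<ge> 1" and N: "N > 0"
    and B: "\<And>t. t \<in> {0..T + 1} \<Longrightarrow> vnorm k (s t) \<le> B" and B0: "B \<ge> 0"
    and init: "\<And>i. i \<le> k \<Longrightarrow> s 0 i = m i" and T: "T > 0"
  defines "E \<equiv> euler_step lam k (1 / (real lam * real N))" and "G \<equiv> exp (3 * (real lam * T))"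
  assumes p0: "vnorm k (\<lambda>i. frac N (p ! 0) i - m i) \<le> \<epsilon> / (4 * G)"
    and pn: "\<And>n i. n \<le> nat \<lfloor>real N * T\<rfloor> \<Longrightarrow> i \<le> k \<Longrightarrow>
               \<bar>frac N (p ! n) i - (E ^^ (n * lam)) (frac N (p ! 0)) i\<bar> \<le> \<epsilon> / 4"
    and N_large: "(G * 9 * real lam * B * T + 3 * real lam * B) / real N \<le> \<epsilon> / 2"
  shows "(SUP t\<in>{0..T}. vnorm k (\<lambda>i. rescaled N p t i - s t i)) \<le> \<epsilon>"
proof (rule cSUP_least)
  show "{0..T} \<noteq> {}"
    using T by simp
  fix t assume t: "t \<in> {0..T}"
  define n where "n = nat \<lfloor>real N * t\<rfloor>"
  define h where "h = 1 / (real lam * real N)"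
  have Nr: "real N > 0" and lamr: "real lam > 0" and h0: "h > 0"
    using N lam by (simp_all add: h_def)
  have n_le: "real n \<le> real N * t" and nt: "real n / real N \<le> t"
    and tn: "t - 1 / real N < real n / real N"
    using floor_scaled_time_bounds[OF N, of t] t by (simp_all add: n_def)
  have nL: "n \<le> nat \<lfloor>real N * T\<rfloor>"
    unfolding n_def using t by (intro nat_mono floor_mono mult_left_mono) auto
  have steps: "real (n * lam) \<le> real N * (real lam * T)"
    using n_le t mult_left_mono[of t T "real N"] lamr by (simp add: algebra_simps)
  have time: "real (n * lam) * h = real n / real N"
    using lamr by (simp add: h_def)
  have rate: "1 + 3 * real lam * h = 1 + 3 / real N"
    using lamr by (simp add: h_def)
  have growth: "(1 + 3 / real N) ^ (n * lam) \<le> G"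
  proof -
    have "(1 + 3 / real N) ^ (n * lam) \<le> exp (real (n * lam) * (3 / real N))"
      by (rule one_plus_power_le_exp) simp
    also have "\<dots> \<le> G"
      using steps Nr by (simp add: G_def field_simps)
    finally show ?thesis .
  qed
  have nT1: "real n / real N \<in> {0..T + 1}" and tT1: "t \<in> {0..T + 1}"
    using nt t by auto
  then have jT: "real (n * lam) * h \<le> T + 1"
    unfolding time by simp
  have initial: "vnorm k (\<lambda>l. (E ^^ (n * lam)) (frac N (p ! 0)) l - (E ^^ (n * lam)) m l) \<le> \<epsilon> / 4"
  proof -
    have "vnorm k (\<lambda>l. (E ^^ (n * lam)) (frac N (p ! 0)) l - (E ^^ (n * lam)) m l)
        \<le> (1 + 3 / real N) ^ (n * lam) * vnorm k (\<lambda>l. frac N (p ! 0) l - m l)"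
      using vnorm_euler_iter_le[OF k, where h=h and lam=lam and n="n * lam"] h0 lam
      by (simp add: E_def h_def rate flip: euler_iter_diff)
    also have "\<dots> \<le> G * (\<epsilon> / (4 * G))"
      using p0 growth by (intro mult_mono) (auto simp: vnorm_nonneg G_def)
    finally show ?thesis
      by (simp add: G_def)
  qed
  have euler: "vnorm k (\<lambda>l. (E ^^ (n * lam)) m l - s (real n / real N) l) \<le> G * 9 * real lam * B * T / real N"
  proof -
    have "vnorm k (\<lambda>l. (E ^^ (n * lam)) m l - s (real (n * lam) * h) l)
        \<le> (1 + 3 * real lam * h) ^ (n * lam) * (real (n * lam) * (9 * real lam ^ 2 * B * h ^ 2))"
      unfolding E_def h_def[symmetric]
      by (rule euler_global_error[OF sol k h0 B init jT])
    also have "\<dots> \<le> G * ((real N * (real lam * T)) * (9 * real lam ^ 2 * B * h ^ 2))"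
      unfolding rate using B0 T by (intro mult_mono growth steps) (auto simp: G_def)
    also have "\<dots> = G * 9 * real lam * B * T / real N"
      using lamr Nr by (simp add: h_def field_simps power2_eq_square)
    finally show ?thesis
      by (simp only: time)
  qed
  have lipschitz: "vnorm k (\<lambda>l. s (real n / real N) l - s t l) \<le> 3 * real lam * B / real N"
  proof -
    have "3 * real lam * B * \<bar>real n / real N - t\<bar> \<le> 3 * real lam * B * (1 / real N)"
      using nt tn B0 by (intro mult_left_mono) auto
    then show ?thesis
      using mean_field_solution_lipschitz[OF sol k B nT1 tT1] by simp
  qed
  show "vnorm k (\<lambda>i. rescaled N p t i - s t i) \<le> \<epsilon>"
  proof (rule vnorm_le)
    fix i assume i: "i \<le> k"
    have "rescaled N p t i = frac N (p ! n) i"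
      by (simp add: rescaled_def n_def)
    moreover have "\<bar>(E ^^ (n * lam)) (frac N (p ! 0)) i - (E ^^ (n * lam)) m i\<bar> \<le> \<epsilon> / 4"
      using abs_le_vnorm[OF i] initial by (rule order.trans)
    moreover have "\<bar>(E ^^ (n * lam)) m i - s (real n / real N) i\<bar> \<le> G * 9 * real lam * B * T / real N"
      using abs_le_vnorm[OF i] euler by (rule order.trans)
    moreover have "\<bar>s (real n / real N) i - s t i\<bar> \<le> 3 * real lam * B / real N"
      using abs_le_vnorm[OF i] lipschitz by (rule order.trans)
    moreover have "G * 9 * real lam * B * T / real N + 3 * real lam * B / real N \<le> \<epsilon> / 2"
      using N_large by (simp only: add_divide_distrib)
    ultimately show "\<bar>rescaled N p t i - s t i\<bar> \<le> \<epsilon>"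
      using pn[OF nL i] by linarith
  qed
qed

lemma prob_path_euler_deviation_le:
  assumes mu: "set_pmf mu \<subseteq> configs N k" and N: "N > 0" and k: "k \<ge> 1" and lam: "lam \<ge> 1"
    and i: "i \<le> k" and n: "n \<le> L" and L: "real L \<le> real N * T" and c: "c > 0"
  defines "E \<equiv> euler_step lam k (1 / (real lam * real N))" and "G \<equiv> exp (3 * (real lam * T))"
  shows "measure_pmf.prob (path_pmf (slot lam N k) mu L)
           {p. c < \<bar>frac N (p ! n) i - (E ^^ (n * lam)) (frac N (p ! 0)) i\<bar>}
         \<le> 4 * (real lam * T) ^ 2 * (4 * G) ^ 4 / c ^ 4 / real N ^ 2"
proof (rule prob_path_pmf_first_nth_le[OF n])
  have steps: "real (n * lam) \<le> real N * (real lam * T)"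
    using n L mult_left_mono[of "real n" "real N * T" "real lam"] by (simp add: algebra_simps)
  show "0 \<le> 4 * (real lam * T) ^ 2 * (4 * G) ^ 4 / c ^ 4 / real N ^ 2"
    using c by (simp add: G_def)
  fix x assume "x \<in> set_pmf mu"
  then have x: "x \<in> configs N k"
    using mu by blast
  have "measure_pmf.prob (iter_kernel n (slot lam N k) x)
          {y. c < \<bar>frac N y i - (E ^^ (n * lam)) (frac N x) i\<bar>}
      \<le> 4 * real (n * lam) ^ 2 * (G * 4 / real N) ^ 4 / c ^ 4"
    unfolding slot_def iter_kernel_mult E_def G_def
    by (rule prob_request_chain_deviation_le[OF x N k lam i steps c])
  also have "\<dots> \<le> 4 * (real N * (real lam * T)) ^ 2 * (G * 4 / real N) ^ 4 / c ^ 4"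
    using steps c by (intro divide_right_mono mult_right_mono mult_left_mono power_mono) auto
  also have "\<dots> = 4 * (real lam * T) ^ 2 * (4 * G) ^ 4 / c ^ 4 / real N ^ 2"
    using N by (simp add: field_simps power2_eq_square power4_eq_xxxx)
  finally show "measure_pmf.prob (iter_kernel n (slot lam N k) x)
          {y. c < \<bar>frac N y i - (E ^^ (n * lam)) (frac N x) i\<bar>}
      \<le> 4 * (real lam * T) ^ 2 * (4 * G) ^ 4 / c ^ 4 / real N ^ 2" .
qed

lemma prob_sup_deviation_le:
  assumes sol: "mean_field_solution lam k s" and k: "k \<ge> 1" and lam: "lam \<ge> 1" and N: "N > 0"
    and mu: "set_pmf mu \<subseteq> configs N k" and init: "\<And>i. i \<le> k \<Longrightarrow> s 0 i = m i"
    and B: "\<And>t. t \<in> {0..T + 1} \<Longrightarrow> vnorm k (s t) \<le> B" and B0: "B \<ge> 0"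
    and T: "T > 0" and \<epsilon>: "\<epsilon> > 0"
  defines "G \<equiv> exp (3 * (real lam * T))"
  assumes N_large: "(G * 9 * real lam * B * T + 3 * real lam * B) / real N \<le> \<epsilon> / 2"
  shows "measure_pmf.prob (path_pmf (slot lam N k) mu (nat \<lfloor>real N * T\<rfloor>))
           {p. \<epsilon> < (SUP t\<in>{0..T}. vnorm k (\<lambda>i. rescaled N p t i - s t i))}
         \<le> measure_pmf.prob mu {xs. \<epsilon> / (4 * G) < vnorm k (\<lambda>i. frac N xs i - m i)}
           + (T + 1) * (real k + 1) * (4 * (real lam * T) ^ 2 * (4 * G) ^ 4 / (\<epsilon> / 4) ^ 4) / real N"
proof -
  define L where "L = nat \<lfloor>real N * T\<rfloor>"
  define E where "E = euler_step lam k (1 / (real lam * real N))"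
  define Q where "Q = 4 * (real lam * T) ^ 2 * (4 * G) ^ 4 / (\<epsilon> / 4) ^ 4"
  let ?path = "path_pmf (slot lam N k) mu L"
  define A0 where "A0 = {p :: nat list list. \<epsilon> / (4 * G) < vnorm k (\<lambda>i. frac N (p ! 0) i - m i)}"
  define A where "A = (\<lambda>(n, i). {p :: nat list list. \<epsilon> / 4 < \<bar>frac N (p ! n) i - (E ^^ (n * lam)) (frac N (p ! 0)) i\<bar>})"
  have card: "real (card ({..L} \<times> {..k})) = (real L + 1) * (real k + 1)"
    by (simp add: card_cartesian_product algebra_simps)
  have L: "real L \<le> real N * T"
    using T N by (simp add: L_def)
  then have L1: "real L + 1 \<le> real N * (T + 1)"
    using N by (simp add: algebra_simps)
  have "{p. \<epsilon> < (SUP t\<in>{0..T}. vnorm k (\<lambda>i. rescaled N p t i - s t i))} \<subseteq> A0 \<union> (\<Union>x\<in>{..L} \<times> {..k}. A x)"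
    using sup_deviation_le_if_close_to_euler[OF sol k lam N B B0 init T _ _ N_large[unfolded G_def]]
    by (force simp: A0_def A_def E_def G_def L_def not_less)
  then have "measure_pmf.prob ?path {p. \<epsilon> < (SUP t\<in>{0..T}. vnorm k (\<lambda>i. rescaled N p t i - s t i))}
      \<le> measure_pmf.prob ?path A0 + measure_pmf.prob ?path (\<Union>x\<in>{..L} \<times> {..k}. A x)"
    by (intro order.trans[OF measure_pmf.finite_measure_mono measure_Un_le]) auto
  also have "measure_pmf.prob ?path A0 = measure_pmf.prob mu {xs. \<epsilon> / (4 * G) < vnorm k (\<lambda>i. frac N xs i - m i)}"
    unfolding A0_def by (rule prob_path_pmf_first)
  also have "measure_pmf.prob ?path (\<Union>x\<in>{..L} \<times> {..k}. A x) \<le> (\<Sum>x\<in>{..L} \<times> {..k}. measure_pmf.prob ?path (A x))"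
    by (rule measure_pmf.finite_measure_subadditive_finite) auto
  also have "\<dots> \<le> real (card ({..L} \<times> {..k})) * (Q / real N ^ 2)"
    using prob_path_euler_deviation_le[OF mu N k lam _ _ L, where c="\<epsilon> / 4"] \<epsilon>
    by (intro sum_bounded_above) (auto simp: A_def E_def Q_def G_def)
  also have "\<dots> = (real L + 1) * (real k + 1) * (Q / real N ^ 2)"
    by (simp only: card)
  also have "\<dots> \<le> real N * (T + 1) * (real k + 1) * (Q / real N ^ 2)"
    using L1 by (intro mult_right_mono) (auto simp: Q_def G_def)
  also have "\<dots> = (T + 1) * (real k + 1) * Q / real N"
    using N by (simp add: power2_eq_square)
  finally show ?thesis
    by (simp add: L_def Q_def)
qed

theorem theorem4:
  fixes k lam :: nat and m :: "nat \<Rightarrow> real" and s :: "real \<Rightarrow> nat \<Rightarrow> real"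
    and mu :: "nat \<Rightarrow> nat list pmf"
  assumes k: "k \<ge> 1" and lam: "lam \<ge> 1"
    and m_prob: "\<forall>i\<le>k. m i \<ge> 0" "(\<Sum>i\<le>k. m i) = 1"
    and mu_valid: "\<forall>N>0. \<forall>xs\<in>set_pmf (mu N). length xs = N \<and> (\<forall>x\<in>set xs. x \<le> k)"
    and init: "\<forall>\<epsilon>>0. ((\<lambda>N. measure_pmf.prob (mu N)
                  {xs. vnorm k (\<lambda>i. frac N xs i - m i) > \<epsilon>}) \<longlonglongrightarrow> 0)"
    and s0: "\<forall>i\<le>k. s 0 i = m i"
    and ode: "\<forall>t\<ge>0. \<forall>i\<le>k.
                ((\<lambda>u. s u i) has_real_derivative ode_rhs lam k (s t) i) (at t within {0..})"
  shows "\<forall>T>0. \<forall>\<epsilon>>0. ((\<lambda>N. measure_pmf.prob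
            (path_pmf (slot lam N k) (mu N) (nat \<lfloor>real N * T\<rfloor>))
            {p. (SUP t\<in>{0..T}. vnorm k (\<lambda>i. rescaled N p t i - s t i)) > \<epsilon>}) \<longlonglongrightarrow> 0)"
proof (intro allI impI)
  fix T \<epsilon> :: real assume T: "T > 0" and \<epsilon>: "\<epsilon> > 0"
  have sol: "mean_field_solution lam k s"
    using ode by (simp add: mean_field_solution_def)
  obtain B where B0: "B \<ge> 0" and B: "\<And>t. t \<in> {0..T + 1} \<Longrightarrow> vnorm k (s t) \<le> B"
    using mean_field_solution_bounded[OF sol, where T="T + 1"] by blast
  define G where "G = exp (3 * (real lam * T))"
  define C where "C = (T + 1) * (real k + 1) * (4 * (real lam * T) ^ 2 * (4 * G) ^ 4 / (\<epsilon> / 4) ^ 4)"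
  let ?P = "\<lambda>N. measure_pmf.prob (path_pmf (slot lam N k) (mu N) (nat \<lfloor>real N * T\<rfloor>))
            {p. \<epsilon> < (SUP t\<in>{0..T}. vnorm k (\<lambda>i. rescaled N p t i - s t i))}"
  let ?g = "\<lambda>N. measure_pmf.prob (mu N) {xs. \<epsilon> / (4 * G) < vnorm k (\<lambda>i. frac N xs i - m i)} + C / real N"
  have "\<forall>\<^sub>F N in sequentially. (G * 9 * real lam * B * T + 3 * real lam * B) / real N < \<epsilon> / 2"
    using \<epsilon> by (intro order_tendstoD(2)[OF lim_const_over_n]) simp
  then have bound: "\<forall>\<^sub>F N in sequentially. ?P N \<le> ?g N"
    using eventually_gt_at_top[of 0]
  proof eventually_elim
    case (elim N)
    have mu_N: "set_pmf (mu N) \<subseteq> configs N k"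
      using mu_valid elim(2) by (auto simp: configs_def)
    have N_large: "(G * 9 * real lam * B * T + 3 * real lam * B) / real N \<le> \<epsilon> / 2"
      using elim(1) by (rule less_imp_le)
    show ?case
      unfolding C_def G_def
      by (rule prob_sup_deviation_le[OF sol k lam elim(2) mu_N _ _ B0 T \<epsilon> N_large[unfolded G_def]])
         (use s0 B in auto)
  qed
  have limit: "?g \<longlonglongrightarrow> 0"
    using init \<epsilon> by (intro tendsto_add_zero lim_const_over_n) (simp_all add: G_def)
  show "?P \<longlonglongrightarrow> 0"
  proof (rule tendsto_sandwich[where f="\<lambda>_. 0" and h="?g"])
    show "\<forall>\<^sub>F N in sequentially. 0 \<le> ?P N"
      by simp
  qed (fact bound limit tendsto_const)+
qed

end
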